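(* Let $Y/X$ be a Galois cover of finite digraphs with abelian Galois group $G=\mathrm{Gal}(Y/X)$, and let $F$ be an algebraically closed field of characteristic zero. Then $$g_Y(u)=g_X(u)\prod_{\substack{\psi\in\widehat G(F)\\ \psi\neq\psi_0}}g_{Y/X}(u,\psi).$$
   Context: Digraph $X=(V_X,E_X)$ with incidence $e\mapsto(o(e),t(e))$; strongly connected means a directed path exists between any two distinct vertices. A cover $f:Y\to X$ is a morphism surjective on vertices and bijective from edges with origin $w$ (resp. terminus $w$) onto edges with origin $f(w)$ (resp. terminus $f(w)$) for each $w\in V_Y$. $\mathrm{Aut}(Y/X)$ is the group of digraph automorphisms $\sigma$ of $Y$ with $f\circ\sigma=f$; the cover is Galois if $X,Y$ are strongly connected and $\mathrm{Aut}(Y/X)$ acts transitively on each fibre $f^{-1}(v)$, and then $\mathrm{Gal}(Y/X)=\mathrm{Aut}(Y/X)$; it acts freely on $V_Y$. $\mathcal{A}_Y(w)=\sum_{o(\varepsilon)=w}t(\varepsilon)$; $g_Y(u)=\det(\mathcal{I}-\mathcal{A}_Yu)$, similarly $g_X$. $\gamma_{Y/X}(u)=\det_{\mathbb{Z}[G][u]}(\mathcal{I}-\mathcal{A}_Yu)$, computed on the free $\mathbb{Z}[G][u]$-module $\mathbb{Z}V_Y[u]$. $\widehat G(F)=\mathrm{Hom}(G,F^\times)$, $\psi_0$ the trivial character, and $g_{Y/X}(u,\psi)\in F[u]$ is obtained by applying $\psi$ to the coefficients of $\gamma_{Y/X}(u)$. *)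

theory Defs
  imports "HOL-Combinatorics.Permutations" "HOL-Computational_Algebra.Polynomial"
begin

definition digraph :: "'v set \<Rightarrow> 'e set \<Rightarrow> ('e \<Rightarrow> 'v) \<Rightarrow> ('e \<Rightarrow> 'v) \<Rightarrow> bool" where
  "digraph V E org t \<longleftrightarrow> (\<forall>e\<in>E. org e \<in> V \<and> t e \<in> V)"

definition strongly_connected :: "'v set \<Rightarrow> 'e set \<Rightarrow> ('e \<Rightarrow> 'v) \<Rightarrow> ('e \<Rightarrow> 'v) \<Rightarrow> bool" where
  "strongly_connected V E org t \<longleftrightarrow>
     (\<forall>v\<in>V. \<forall>w\<in>V. v \<noteq> w \<longrightarrow> (v, w) \<in> {(org e, t e) | e. e \<in> E}\<^sup>+)"

definition dg_morphism ::
  "'v set \<Rightarrow> 'e set \<Rightarrow> ('e \<Rightarrow> 'v) \<Rightarrow> ('e \<Rightarrow> 'v) \<Rightarrow>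
   'x set \<Rightarrow> 'd set \<Rightarrow> ('d \<Rightarrow> 'x) \<Rightarrow> ('d \<Rightarrow> 'x) \<Rightarrow> ('v \<Rightarrow> 'x) \<Rightarrow> ('e \<Rightarrow> 'd) \<Rightarrow> bool" where
  "dg_morphism VY EdY oY tY VX EdX oX tX fV fE \<longleftrightarrow>
     (\<forall>w\<in>VY. fV w \<in> VX) \<and>
     (\<forall>e\<in>EdY. fE e \<in> EdX \<and> oX (fE e) = fV (oY e) \<and> tX (fE e) = fV (tY e))"

definition is_cover ::
  "'v set \<Rightarrow> 'e set \<Rightarrow> ('e \<Rightarrow> 'v) \<Rightarrow> ('e \<Rightarrow> 'v) \<Rightarrow>
   'x set \<Rightarrow> 'd set \<Rightarrow> ('d \<Rightarrow> 'x) \<Rightarrow> ('d \<Rightarrow> 'x) \<Rightarrow> ('v \<Rightarrow> 'x) \<Rightarrow> ('e \<Rightarrow> 'd) \<Rightarrow> bool" where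
  "is_cover VY EdY oY tY VX EdX oX tX fV fE \<longleftrightarrow>
     dg_morphism VY EdY oY tY VX EdX oX tX fV fE \<and>
     fV ` VY = VX \<and>
     (\<forall>w\<in>VY. bij_betw fE {e\<in>EdY. oY e = w} {e\<in>EdX. oX e = fV w} \<and>
              bij_betw fE {e\<in>EdY. tY e = w} {e\<in>EdX. tX e = fV w})"

text \<open>A digraph automorphism is a pair (vertex map, edge map) of bijections
  compatible with incidence; outside the vertex/edge sets the maps are the
  identity (a normalisation making each automorphism a unique pair of functions).\<close>

definition dg_automorphism ::
  "'v set \<Rightarrow> 'e set \<Rightarrow> ('e \<Rightarrow> 'v) \<Rightarrow> ('e \<Rightarrow> 'v) \<Rightarrow> ('v \<Rightarrow> 'v) \<times> ('e \<Rightarrow> 'e) \<Rightarrow> bool" where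
  "dg_automorphism V E org t \<sigma> \<longleftrightarrow>
     bij_betw (fst \<sigma>) V V \<and> bij_betw (snd \<sigma>) E E \<and>
     (\<forall>e\<in>E. org (snd \<sigma> e) = fst \<sigma> (org e) \<and> t (snd \<sigma> e) = fst \<sigma> (t e)) \<and>
     (\<forall>x. x \<notin> V \<longrightarrow> fst \<sigma> x = x) \<and> (\<forall>x. x \<notin> E \<longrightarrow> snd \<sigma> x = x)"

definition Aut_cover ::
  "'v set \<Rightarrow> 'e set \<Rightarrow> ('e \<Rightarrow> 'v) \<Rightarrow> ('e \<Rightarrow> 'v) \<Rightarrow> ('v \<Rightarrow> 'x) \<Rightarrow> ('e \<Rightarrow> 'd)
   \<Rightarrow> (('v \<Rightarrow> 'v) \<times> ('e \<Rightarrow> 'e)) set" where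
  "Aut_cover VY EdY oY tY fV fE =
     {\<sigma>. dg_automorphism VY EdY oY tY \<sigma> \<and>
          (\<forall>w\<in>VY. fV (fst \<sigma> w) = fV w) \<and> (\<forall>e\<in>EdY. fE (snd \<sigma> e) = fE e)}"

definition aut_comp :: "('v \<Rightarrow> 'v) \<times> ('e \<Rightarrow> 'e) \<Rightarrow> ('v \<Rightarrow> 'v) \<times> ('e \<Rightarrow> 'e) \<Rightarrow> ('v \<Rightarrow> 'v) \<times> ('e \<Rightarrow> 'e)" where
  "aut_comp \<sigma> \<tau> = (fst \<sigma> \<circ> fst \<tau>, snd \<sigma> \<circ> snd \<tau>)"

definition galois_cover ::
  "'v set \<Rightarrow> 'e set \<Rightarrow> ('e \<Rightarrow> 'v) \<Rightarrow> ('e \<Rightarrow> 'v) \<Rightarrow>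
   'x set \<Rightarrow> 'd set \<Rightarrow> ('d \<Rightarrow> 'x) \<Rightarrow> ('d \<Rightarrow> 'x) \<Rightarrow> ('v \<Rightarrow> 'x) \<Rightarrow> ('e \<Rightarrow> 'd) \<Rightarrow> bool" where
  "galois_cover VY EdY oY tY VX EdX oX tX fV fE \<longleftrightarrow>
     is_cover VY EdY oY tY VX EdX oX tX fV fE \<and>
     strongly_connected VY EdY oY tY \<and> strongly_connected VX EdX oX tX \<and>
     (\<forall>w\<in>VY. \<forall>w'\<in>VY. fV w = fV w' \<longrightarrow>
        (\<exists>\<sigma>\<in>Aut_cover VY EdY oY tY fV fE. fst \<sigma> w = w'))"

definition characters :: "'g set \<Rightarrow> ('g \<Rightarrow> 'g \<Rightarrow> 'g) \<Rightarrow> ('g \<Rightarrow> 'f::field) set" where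
  "characters G gmul =
     {\<psi>. (\<forall>\<sigma>\<in>G. \<psi> \<sigma> \<noteq> 0) \<and> (\<forall>\<sigma>\<in>G. \<forall>\<tau>\<in>G. \<psi> (gmul \<sigma> \<tau>) = \<psi> \<sigma> * \<psi> \<tau>) \<and>
          (\<forall>\<sigma>. \<sigma> \<notin> G \<longrightarrow> \<psi> \<sigma> = 0)}"

definition trivial_character :: "'g set \<Rightarrow> ('g \<Rightarrow> 'f::field)" where
  "trivial_character G = (\<lambda>\<sigma>. if \<sigma> \<in> G then 1 else 0)"

definition det_on :: "'a set \<Rightarrow> ('a \<Rightarrow> 'a \<Rightarrow> 'r::comm_ring_1) \<Rightarrow> 'r" where
  "det_on V M = (\<Sum>p\<in>{p. p permutes V}. of_int (sign p) * (\<Prod>v\<in>V. M v (p v)))"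

definition adj_count :: "'e set \<Rightarrow> ('e \<Rightarrow> 'v) \<Rightarrow> ('e \<Rightarrow> 'v) \<Rightarrow> 'v \<Rightarrow> 'v \<Rightarrow> nat" where
  "adj_count E org t v w = card {e\<in>E. org e = v \<and> t e = w}"

definition g_dg :: "'v set \<Rightarrow> 'e set \<Rightarrow> ('e \<Rightarrow> 'v) \<Rightarrow> ('e \<Rightarrow> 'v) \<Rightarrow> 'r::comm_ring_1 poly" where
  "g_dg V E org t =
     det_on V (\<lambda>v w. (if v = w then 1 else 0) - [:0, of_nat (adj_count E org t v w):])"

text \<open>The twisted polynomial g_{Y/X}(u, psi): psi applied to the coefficients of
  det over Z[G][u] of (I - A_Y u) on the free Z[G][u]-module Z V_Y[u], computed
  in the basis given by a section s of f on vertices.  The matrix of A_Y over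
  Z[G] in this basis has (v,v')-entry  sum of sigma_eps over edges eps with
  o(eps) = s v and f(t eps) = v', where sigma_eps in G is the unique element with
  sigma_eps (s v') = t eps.  Since psi is a ring homomorphism Z[G] -> F, applying
  psi to the coefficients of the determinant is the determinant of the
  psi-image of the matrix.\<close>

definition vsection :: "'v set \<Rightarrow> ('v \<Rightarrow> 'x) \<Rightarrow> 'x \<Rightarrow> 'v" where
  "vsection VY fV v = (SOME w. w \<in> VY \<and> fV w = v)"

definition edge_elem ::
  "'v set \<Rightarrow> 'e set \<Rightarrow> ('e \<Rightarrow> 'v) \<Rightarrow> ('e \<Rightarrow> 'v) \<Rightarrow> ('v \<Rightarrow> 'x) \<Rightarrow> ('e \<Rightarrow> 'd) \<Rightarrow> 'e
   \<Rightarrow> ('v \<Rightarrow> 'v) \<times> ('e \<Rightarrow> 'e)" where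
  "edge_elem VY EdY oY tY fV fE \<epsilon> =
     (THE \<sigma>. \<sigma> \<in> Aut_cover VY EdY oY tY fV fE \<and> fst \<sigma> (vsection VY fV (fV (tY \<epsilon>))) = tY \<epsilon>)"

definition g_twisted ::
  "'v set \<Rightarrow> 'e set \<Rightarrow> ('e \<Rightarrow> 'v) \<Rightarrow> ('e \<Rightarrow> 'v) \<Rightarrow> 'x set \<Rightarrow> ('v \<Rightarrow> 'x) \<Rightarrow> ('e \<Rightarrow> 'd)
   \<Rightarrow> ((('v \<Rightarrow> 'v) \<times> ('e \<Rightarrow> 'e)) \<Rightarrow> 'f::field) \<Rightarrow> 'f poly" where
  "g_twisted VY EdY oY tY VX fV fE \<psi> =
     det_on VX (\<lambda>v v'. (if v = v' then 1 else 0) -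
        [:0, (\<Sum>\<epsilon>\<in>{\<epsilon>\<in>EdY. oY \<epsilon> = vsection VY fV v \<and> fV (tY \<epsilon>) = v'}.
                 \<psi> (edge_elem VY EdY oY tY fV fE \<epsilon>)):])"

end

(*
  Label every vertex w of Y by its image f w in X and by the unique element of G that carries
  a fixed base point of the fibre of f w to w; since G acts freely and transitively on fibres,
  this identifies V_Y with V_X x G.  For a character phi of G and v in V_X, the function
  w |-> [f w = v] phi (label w) is mapped by A_Y to a combination of such functions whose
  coefficients form the twisted matrix M_phi of g_{Y/X}(u, phi).  Since G is abelian and F is
  algebraically closed of characteristic zero, G has exactly |G| characters (each character of
  a subgroup H extends in exactly k ways when adjoining an element of order k modulo H), and
  by orthogonality the resulting |V_X| |G| functions form a basis.  Hence I - A_Y u is similar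
  to the block-diagonal matrix with blocks I - M_phi u, and the block of the trivial character
  is I - A_X u.
*)

theory Submission
  imports Defs "Jordan_Normal_Form.Char_Poly" "HOL-Algebra.FiniteProduct"
begin

section \<open>Determinants of matrices indexed by finite sets\<close>

lemma det_on_cong:
  assumes "\<And>a b. a \<in> V \<Longrightarrow> b \<in> V \<Longrightarrow> M a b = M' a b"
  shows "det_on V M = det_on V M'"
  unfolding det_on_def
proof (rule sum.cong[OF refl])
  fix p assume "p \<in> {p. p permutes V}"
  then have "\<And>v. v \<in> V \<Longrightarrow> p v \<in> V" by (simp add: permutes_in_image)
  then show "of_int (sign p) * (\<Prod>v\<in>V. M v (p v)) = of_int (sign p) * (\<Prod>v\<in>V. M' v (p v))"
    using assms by (auto intro!: prod.cong)
qed

lemma det_on_reindex: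
  assumes h: "bij_betw h W V" and fin: "finite W"
  shows "det_on V M = det_on W (\<lambda>a b. M (h a) (h b))"
proof -
  let ?m = "map_permutation W h"
  have hV: "h ` W = V" and inj: "inj_on h W" using h by (auto simp: bij_betw_def)
  have "?m = (\<lambda>\<pi> x. if x \<in> V then h (\<pi> (inv_into W h x)) else x)"
    by (auto simp: fun_eq_iff map_permutation_def restrict_id_def hV)
  then have bij: "bij_betw ?m {p. p permutes W} {p. p permutes V}"
    using bij_betw_permutations[OF h] by simp
  have "det_on V M = (\<Sum>p | p permutes W. of_int (sign (?m p)) * (\<Prod>v\<in>V. M v (?m p v)))"
    unfolding det_on_def by (rule sum.reindex_bij_betw[OF bij, symmetric])
  also have "\<dots> = det_on W (\<lambda>a b. M (h a) (h b))"
    unfolding det_on_def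
  proof (rule sum.cong[OF refl])
    fix p assume "p \<in> {p. p permutes W}"
    then have "sign (?m p) = sign p" using sign_map_permutation[OF inj _ fin] by auto
    moreover have "(\<Prod>v\<in>V. M v (?m p v)) = (\<Prod>a\<in>W. M (h a) (h (p a)))"
      unfolding hV[symmetric] prod.reindex[OF inj] by (simp add: map_permutation_apply[OF inj])
    ultimately show "of_int (sign (?m p)) * (\<Prod>v\<in>V. M v (?m p v)) =
        of_int (sign p) * (\<Prod>a\<in>W. M (h a) (h (p a)))" by simp
  qed
  finally show ?thesis .
qed

lemma det_on_eq_det_mat:
  assumes e: "bij_betw e {0..<n} V"
  shows "det_on V M = det (mat n n (\<lambda>(i, j). M (e i) (e j)))"
proof -
  have "det_on V M = det_on {0..<n} (\<lambda>a b. M (e a) (e b))"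
    by (rule det_on_reindex[OF e]) simp
  also have "\<dots> = det (mat n n (\<lambda>(i, j). M (e i) (e j)))"
    unfolding det_on_def det_def'[OF mat_carrier]
  proof (rule sum.cong[OF refl])
    fix p assume "p \<in> {p. p permutes {0..<n}}"
    then have "\<And>i. i < n \<Longrightarrow> p i < n" by (auto dest: permutes_in_image)
    then show "of_int (sign p) * (\<Prod>a = 0..<n. M (e a) (e (p a))) =
        of_int (sign p) * (\<Prod>i = 0..<n. mat n n (\<lambda>(i, j). M (e i) (e j)) $$ (i, p i))"
      by (auto intro!: prod.cong)
  qed
  finally show ?thesis .
qed

lemma det_on_mult:
  assumes "finite V"
  shows "det_on V (\<lambda>a c. \<Sum>b\<in>V. A a b * B b c) = det_on V A * det_on V B"
proof -
  obtain e where e: "bij_betw e {0..<card V} V" using ex_bij_betw_nat_finite[OF assms] by blast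
  let ?mat = "\<lambda>M. mat (card V) (card V) (\<lambda>(i, j). M (e i) (e j))"
  have "?mat (\<lambda>a c. \<Sum>b\<in>V. A a b * B b c) = ?mat A * ?mat B"
  proof (rule eq_matI)
    fix i j assume "i < dim_row (?mat A * ?mat B)" "j < dim_col (?mat A * ?mat B)"
    then show "?mat (\<lambda>a c. \<Sum>b\<in>V. A a b * B b c) $$ (i, j) = (?mat A * ?mat B) $$ (i, j)"
      using sum.reindex_bij_betw[OF e, of "\<lambda>b. A (e i) b * B b (e j)"] by (simp add: scalar_prod_def)
  qed auto
  then show ?thesis
    unfolding det_on_eq_det_mat[OF e] by (simp add: det_mult[of _ "card V"])
qed

lemma det_on_block_triangular:
  fixes M :: "'a \<Rightarrow> 'a \<Rightarrow> 'r::idom"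
  assumes S: "finite S" and T: "finite T" and disj: "S \<inter> T = {}"
    and zero: "\<And>a b. a \<in> S \<Longrightarrow> b \<in> T \<Longrightarrow> M a b = 0"
  shows "det_on (S \<union> T) M = det_on S M * det_on T M"
proof -
  obtain e1 where e1: "bij_betw e1 {0..<card S} S" using ex_bij_betw_nat_finite[OF S] by blast
  obtain e2 where e2: "bij_betw e2 {0..<card T} T" using ex_bij_betw_nat_finite[OF T] by blast
  define n1 n2 where "n1 = card S" and "n2 = card T"
  define e where "e i = (if i < n1 then e1 i else e2 (i - n1))" for i
  have "bij_betw e {0..<n1} S"
    using e1 unfolding n1_def by (rule bij_betw_cong[THEN iffD1, rotated]) (simp add: e_def n1_def)
  moreover have "bij_betw e {n1..<n1+n2} T"
  proof -
    have "bij_betw (\<lambda>i. i - n1) {n1..<n1 + n2} {0..<n2}"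
      by (rule bij_betw_byWitness[of _ "\<lambda>i. i + n1"]) auto
    from bij_betw_trans[OF this e2[folded n2_def]] show ?thesis
      by (rule bij_betw_cong[THEN iffD1, rotated]) (simp add: e_def)
  qed
  ultimately have "bij_betw e ({0..<n1} \<union> {n1..<n1+n2}) (S \<union> T)"
    using disj by (rule bij_betw_combine)
  moreover have "{0..<n1} \<union> {n1..<n1+n2} = {0..<n1+n2}" by auto
  ultimately have e: "bij_betw e {0..<n1+n2} (S \<union> T)" by simp
  let ?A1 = "mat n1 n1 (\<lambda>(i, j). M (e1 i) (e1 j))"
  let ?A3 = "mat n2 n1 (\<lambda>(i, j). M (e2 i) (e1 j))"
  let ?A4 = "mat n2 n2 (\<lambda>(i, j). M (e2 i) (e2 j))"
  have "mat (n1+n2) (n1+n2) (\<lambda>(i, j). M (e i) (e j)) = four_block_mat ?A1 (0\<^sub>m n1 n2) ?A3 ?A4"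
  proof (rule eq_matI)
    fix i j assume "i < dim_row (four_block_mat ?A1 (0\<^sub>m n1 n2) ?A3 ?A4)"
      "j < dim_col (four_block_mat ?A1 (0\<^sub>m n1 n2) ?A3 ?A4)"
    moreover have "i < n1 \<Longrightarrow> e1 i \<in> S" and "j < n1 + n2 \<Longrightarrow> \<not> j < n1 \<Longrightarrow> e2 (j - n1) \<in> T"
      using e1 e2 by (auto simp: n1_def n2_def bij_betw_def)
    ultimately show "mat (n1+n2) (n1+n2) (\<lambda>(i, j). M (e i) (e j)) $$ (i, j) =
        four_block_mat ?A1 (0\<^sub>m n1 n2) ?A3 ?A4 $$ (i, j)"
      using zero by (auto simp: e_def)
  qed auto
  then show ?thesis
    unfolding det_on_eq_det_mat[OF e] det_on_eq_det_mat[OF e1] det_on_eq_det_mat[OF e2]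
    by (simp add: det_four_block_mat_upper_right_zero[of _ n1 _ n2] n1_def n2_def)
qed

lemma det_on_block_diagonal:
  fixes N :: "'c \<Rightarrow> 'a \<Rightarrow> 'a \<Rightarrow> 'r::idom"
  assumes S: "finite S" and "finite C"
  shows "det_on (S \<times> C) (\<lambda>(a, x) (b, y). if x = y then N x a b else 0) = (\<Prod>x\<in>C. det_on S (N x))"
  using \<open>finite C\<close>
proof (induction C rule: finite_induct)
  case (insert c C)
  let ?M = "\<lambda>(a, x) (b, y). if x = y then N x a b else 0"
  have split: "S \<times> insert c C = (S \<times> {c}) \<union> (S \<times> C)" by auto
  have "det_on (S \<times> insert c C) ?M = det_on (S \<times> {c}) ?M * det_on (S \<times> C) ?M"
    unfolding split by (rule det_on_block_triangular) (use insert.hyps S in auto)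
  moreover have "det_on (S \<times> {c}) ?M = det_on S (N c)"
  proof -
    have "bij_betw (\<lambda>a. (a, c)) S (S \<times> {c})" by (auto simp: bij_betw_def inj_on_def)
    from det_on_reindex[OF this S, of ?M] show ?thesis by simp
  qed
  ultimately show ?case using insert by simp
qed (simp add: det_on_def)

lemma det_on_scalar:
  assumes "finite V"
  shows "det_on V (\<lambda>a b. if a = b then c else 0) = c ^ card V"
proof -
  have "det_on V (\<lambda>a b. if a = b then c else 0) =
      (\<Sum>p\<in>{id}. of_int (sign p) * (\<Prod>v\<in>V. if v = p v then c else 0))"
    unfolding det_on_def
  proof (rule sum.mono_neutral_right)
    show "\<forall>p\<in>{p. p permutes V} - {id}. of_int (sign p) * (\<Prod>v\<in>V. if v = p v then c else 0) = 0"
    proof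
      fix p assume p: "p \<in> {p. p permutes V} - {id}"
      then obtain v where "p v \<noteq> v" by (auto simp: fun_eq_iff)
      moreover from this have "v \<in> V" using p by (auto simp: permutes_def)
      ultimately have "(\<Prod>v\<in>V. if v = p v then c else 0) = 0"
        using assms by (intro prod_zero) (auto intro!: bexI[of _ v])
      then show "of_int (sign p) * (\<Prod>v\<in>V. if v = p v then c else 0) = 0" by simp
    qed
  qed (use assms in \<open>auto simp: finite_permutations permutes_id\<close>)
  then show ?thesis by simp
qed

lemma (in comm_ring_hom) hom_det_on: "hom (det_on V M) = det_on V (\<lambda>a b. hom (M a b))"
  unfolding det_on_def by (simp add: hom_distribs)

lemma det_on_eq_if_intertwined:
  fixes A :: "'a \<Rightarrow> 'a \<Rightarrow> 'r::idom" and D :: "'b \<Rightarrow> 'b \<Rightarrow> 'r"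
  assumes S: "finite S" and T: "finite T" and card: "card S = card T"
    and intertwine: "\<And>a j. a \<in> S \<Longrightarrow> j \<in> T \<Longrightarrow> (\<Sum>b\<in>S. A a b * P b j) = (\<Sum>i\<in>T. P a i * D i j)"
    and left_inverse: "\<And>i j. i \<in> T \<Longrightarrow> j \<in> T \<Longrightarrow> (\<Sum>b\<in>S. Q i b * P b j) = (if i = j then c else 0)"
    and "c \<noteq> 0"
  shows "det_on S A = det_on T D"
proof -
  obtain \<beta> where \<beta>: "bij_betw \<beta> S T" using finite_same_card_bij[OF S T card] by blast
  define P' Q' D' where "P' a b = P a (\<beta> b)" and "Q' a b = Q (\<beta> a) b" and "D' a b = D (\<beta> a) (\<beta> b)"
    for a b
  have \<beta>T: "\<And>a. a \<in> S \<Longrightarrow> \<beta> a \<in> T" using \<beta> by (simp add: bij_betwE)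
  have "det_on S (\<lambda>a d. \<Sum>b\<in>S. A a b * P' b d) = det_on S (\<lambda>a d. \<Sum>b\<in>S. P' a b * D' b d)"
  proof (rule det_on_cong)
    fix a d assume "a \<in> S" "d \<in> S"
    then have "(\<Sum>b\<in>S. A a b * P' b d) = (\<Sum>i\<in>T. P a i * D i (\<beta> d))"
      by (simp add: P'_def intertwine \<beta>T)
    also have "\<dots> = (\<Sum>b\<in>S. P' a b * D' b d)"
      unfolding P'_def D'_def by (rule sum.reindex_bij_betw[OF \<beta>, symmetric])
    finally show "(\<Sum>b\<in>S. A a b * P' b d) = (\<Sum>b\<in>S. P' a b * D' b d)" .
  qed
  then have AD: "det_on S A * det_on S P' = det_on S P' * det_on S D'"
    by (simp add: det_on_mult[OF S])
  have "det_on S Q' * det_on S P' = det_on S (\<lambda>a b. if a = b then c else 0)"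
    unfolding det_on_mult[OF S, symmetric]
    using bij_betw_imp_inj_on[OF \<beta>] \<beta>T by (intro det_on_cong) (auto simp: P'_def Q'_def left_inverse inj_on_eq_iff)
  also have "\<dots> \<noteq> 0" using \<open>c \<noteq> 0\<close> by (simp add: det_on_scalar[OF S])
  finally have "det_on S P' \<noteq> 0" by auto
  with AD have "det_on S A = det_on S D'" by (simp add: mult.commute)
  also have "\<dots> = det_on T D" unfolding D'_def by (rule det_on_reindex[OF \<beta> S, symmetric])
  finally show ?thesis .
qed

lemma sum_pCons_0: "(\<Sum>i\<in>S. [:0, f i:]) = [:0, \<Sum>i\<in>S. f i:]"
  by (induction S rule: infinite_finite_induct) auto

definition rev_char_mat :: "('a \<Rightarrow> 'a \<Rightarrow> 'r::comm_ring_1) \<Rightarrow> 'a \<Rightarrow> 'a \<Rightarrow> 'r poly" where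
  "rev_char_mat M a b = (if a = b then 1 else 0) - [:0, M a b:]"

lemma rev_char_mat_intertwine:
  assumes "finite S" "finite T" "a \<in> S" "j \<in> T"
    and "(\<Sum>b\<in>S. A a b * P b j) = (\<Sum>i\<in>T. P a i * D i j)"
  shows "(\<Sum>b\<in>S. rev_char_mat A a b * [:P b j:]) = (\<Sum>i\<in>T. [:P a i:] * rev_char_mat D i j)"
proof -
  have "(\<Sum>b\<in>S. rev_char_mat A a b * [:P b j:]) =
      (\<Sum>b\<in>S. (if a = b then [:P b j:] else 0) - [:0, A a b * P b j:])"
    unfolding rev_char_mat_def by (intro sum.cong) (auto simp: algebra_simps)
  also have "\<dots> = [:P a j:] - [:0, \<Sum>b\<in>S. A a b * P b j:]"
    using assms by (simp add: sum_subtractf sum_pCons_0)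
  also have "\<dots> = [:P a j:] - [:0, \<Sum>i\<in>T. P a i * D i j:]"
    using assms by simp
  also have "\<dots> = (\<Sum>i\<in>T. (if i = j then [:P a i:] else 0) - [:0, P a i * D i j:])"
    using assms by (simp add: sum_subtractf sum_pCons_0)
  also have "\<dots> = (\<Sum>i\<in>T. [:P a i:] * rev_char_mat D i j)"
    unfolding rev_char_mat_def by (intro sum.cong) (auto simp: algebra_simps)
  finally show ?thesis .
qed

lemma rev_char_mat_block_diagonal:
  "rev_char_mat (\<lambda>(a, x) (b, y). if x = y then N x a b else 0) =
    (\<lambda>(a, x) (b, y). if x = y then rev_char_mat (N x) a b else 0)"
  by (auto simp: rev_char_mat_def fun_eq_iff)

section \<open>Roots in algebraically closed fields\<close>

lemma proots_alg_closed:
  fixes p :: "'a::alg_closed_field poly"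
  assumes "p \<noteq> 0"
  shows "size (proots p) = degree p"
proof -
  obtain A where A: "size A = degree p" "p = Polynomial.smult (lead_coeff p) (\<Prod>x\<in>#A. [:-x, 1:])"
    using alg_closed_imp_factorization[OF assms] by blast
  have "proots (\<Prod>x\<in>#A. [:-x, 1:]) = A"
  proof (induction A)
    case (add y A)
    have "(\<Prod>x\<in>#A. [:-x, 1:]) \<noteq> 0" by (auto simp: prod_mset_zero_iff)
    then have "proots ([:-y, 1:] * (\<Prod>x\<in>#A. [:-x, 1:])) = add_mset y A"
      using add proots_linear_factor[of "-y"] by (subst proots_mult) auto
    then show ?case by simp
  qed simp
  then show ?thesis using A assms by (metis proots_smult leading_coeff_0_iff)
qed

lemma card_roots_rsquarefree:
  fixes p :: "'a::alg_closed_field poly"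
  assumes "rsquarefree p"
  shows "card {x. poly p x = 0} = degree p"
proof -
  have p: "p \<noteq> 0" using assms by (simp add: rsquarefree_def)
  have "degree p = (\<Sum>x\<in>set_mset (proots p). count (proots p) x)"
    using proots_alg_closed[OF p] size_multiset_overloaded_eq by metis
  also have "\<dots> = (\<Sum>x\<in>{x. poly p x = 0}. 1)"
    using p assms by (intro sum.cong) (auto simp: rsquarefree_root_order)
  finally show ?thesis by simp
qed

lemma card_nth_roots_alg_closed:
  fixes a :: "'a::{alg_closed_field, field_char_0}"
  assumes "n > 0" and "a \<noteq> 0"
  shows "card {x. x ^ n = a} = n"
proof -
  define p where "p = monom 1 n + [:-a:]"
  have roots: "poly p x = 0 \<longleftrightarrow> x ^ n = a" for x
    by (simp add: p_def poly_monom)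
  have "degree p = n"
    using \<open>n > 0\<close> by (simp add: p_def degree_add_eq_left degree_monom_eq)
  moreover have "rsquarefree p"
    unfolding rsquarefree_roots
  proof (intro allI notI)
    fix x assume x: "poly p x = 0 \<and> poly (pderiv p) x = 0"
    have "pderiv p = monom (of_nat n) (n - 1)"
      by (simp add: p_def pderiv_add pderiv_monom pderiv_pCons)
    then have "x ^ (n - 1) = 0" using x \<open>n > 0\<close> by (simp add: poly_monom)
    then have "x = 0" by simp
    then show False using x roots \<open>n > 0\<close> \<open>a \<noteq> 0\<close> by (simp add: power_0_left)
  qed
  ultimately show ?thesis using card_roots_rsquarefree[of p] by (simp add: roots)
qed

section \<open>Characters of finite abelian groups\<close>

lemma (in group) subgroup_nat_pow_closed:
  assumes "subgroup H G" "x \<in> H"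
  shows "x [^] (n::nat) \<in> H"
  using assms by (induction n) (auto simp: subgroup.one_closed subgroup.m_closed)

context group
begin

lemma character_one:
  assumes "subgroup H G" and \<psi>: "\<psi> \<in> characters H (mult G)"
  shows "\<psi> \<one> = (1::'f::field)"
proof -
  have one: "\<one> \<in> H" using assms(1) by (rule subgroup.one_closed)
  have "\<psi> \<one> = \<psi> (\<one> \<otimes> \<one>)" by simp
  also have "\<dots> = \<psi> \<one> * \<psi> \<one>" using \<psi> one unfolding characters_def by blast
  finally have "\<psi> \<one> * \<psi> \<one> = \<psi> \<one> * 1" by simp
  moreover have "\<psi> \<one> \<noteq> 0" using \<psi> one unfolding characters_def by blast
  ultimately show ?thesis by (metis mult_left_cancel)
qed

lemma character_nat_pow:
  assumes H: "subgroup H G" and \<psi>: "\<psi> \<in> characters H (mult G)" and x: "x \<in> H"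
  shows "\<psi> (x [^] n) = (\<psi> x :: 'f::field) ^ n"
proof (induction n)
  case (Suc n)
  have "\<psi> (x [^] Suc n) = \<psi> (x [^] n) * \<psi> x"
    using \<psi> x subgroup_nat_pow_closed[OF H x] by (simp add: characters_def)
  then show ?case using Suc by simp
qed (use character_one[OF H \<psi>] in simp)

lemma characters_trivial_subgroup:
  "characters {\<one>} (mult G) = {trivial_character {\<one>} :: 'a \<Rightarrow> 'f::field}"
proof -
  have "\<psi> = trivial_character {\<one>}" if "\<psi> \<in> characters {\<one>} (mult G)" for \<psi> :: "'a \<Rightarrow> 'f"
    using character_one[OF triv_subgroup that] that
    by (auto simp: characters_def trivial_character_def fun_eq_iff)
  then show ?thesis by (auto simp: characters_def trivial_character_def)
qed

lemma character_sum_eq_0: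
  assumes "finite (carrier G)" and \<psi>: "\<psi> \<in> characters (carrier G) (mult G)"
    and nontrivial: "\<psi> \<noteq> trivial_character (carrier G)"
  shows "(\<Sum>x\<in>carrier G. \<psi> x) = (0::'f::field)"
proof -
  have "\<exists>t\<in>carrier G. \<psi> t \<noteq> 1"
  proof (rule ccontr)
    assume "\<not> ?thesis"
    then have "\<psi> = trivial_character (carrier G)"
      using \<psi> by (auto simp: characters_def trivial_character_def fun_eq_iff)
    with nontrivial show False ..
  qed
  then obtain t where t: "t \<in> carrier G" "\<psi> t \<noteq> 1" by blast
  have "bij_betw (\<lambda>x. t \<otimes> x) (carrier G) (carrier G)"
    by (rule bij_betw_byWitness[of _ "\<lambda>x. inv t \<otimes> x"]) (use t in \<open>auto simp: m_assoc[symmetric]\<close>)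
  then have "(\<Sum>x\<in>carrier G. \<psi> x) = (\<Sum>x\<in>carrier G. \<psi> (t \<otimes> x))"
    by (simp add: sum.reindex_bij_betw)
  also have "\<dots> = \<psi> t * (\<Sum>x\<in>carrier G. \<psi> x)"
    using \<psi> t by (simp add: characters_def sum_distrib_left)
  finally have "(1 - \<psi> t) * (\<Sum>x\<in>carrier G. \<psi> x) = 0" by (simp add: algebra_simps)
  then show ?thesis using t(2) by simp
qed

lemma character_orthogonality:
  assumes fin: "finite (carrier G)"
    and \<phi>: "\<phi> \<in> characters (carrier G) (mult G)" and \<psi>: "\<psi> \<in> characters (carrier G) (mult G)"
  shows "(\<Sum>x\<in>carrier G. inverse (\<phi> x) * \<psi> x) =
    (if \<phi> = \<psi> then of_nat (card (carrier G)) else (0::'f::field))"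
proof (cases "\<phi> = \<psi>")
  case False
  define \<chi> where "\<chi> x = (if x \<in> carrier G then inverse (\<phi> x) * \<psi> x else 0)" for x
  have \<chi>: "\<chi> \<in> characters (carrier G) (mult G)"
    using \<phi> \<psi> by (auto simp: characters_def \<chi>_def)
  have "\<chi> \<noteq> trivial_character (carrier G)"
  proof
    assume "\<chi> = trivial_character (carrier G)"
    then have "\<phi> x = \<psi> x" for x
      using \<phi> \<psi> by (cases "x \<in> carrier G")
        (auto simp: \<chi>_def trivial_character_def characters_def fun_eq_iff field_simps dest!: spec[of _ x])
    with False show False by auto
  qed
  then show ?thesis using character_sum_eq_0[OF fin \<chi>] False by (simp add: \<chi>_def)
qed (use \<phi> in \<open>simp add: characters_def\<close>)

end

text \<open>Adjoining to a subgroup \<open>H\<close> an element \<open>g\<close> whose least power in \<open>H\<close> is \<open>g\<^sup>k\<close>: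
  every character of \<open>H\<close> has exactly \<open>k\<close> extensions, one for each \<open>k\<close>-th root of \<open>\<chi> (g\<^sup>k)\<close>.\<close>

locale subgroup_adjoin = comm_group +
  fixes H :: "'a set" and g :: 'a and k :: nat
  assumes subgroup_H: "subgroup H G" and g: "g \<in> carrier G"
    and k_pos: "0 < k" and pow_k: "g [^] k \<in> H"
    and pow_not_in: "\<And>i. 0 < i \<Longrightarrow> i < k \<Longrightarrow> g [^] i \<notin> H"
begin

definition adjoined :: "'a set" where
  "adjoined = (\<lambda>(h, i). h \<otimes> g [^] i) ` (H \<times> {..<k})"

lemma H_carrier: "h \<in> H \<Longrightarrow> h \<in> carrier G"
  using subgroup.subset[OF subgroup_H] by blast

lemma mult_pow_reduce:
  assumes "h \<in> carrier G" "k \<le> m"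
  shows "h \<otimes> g [^] m = (h \<otimes> g [^] k) \<otimes> g [^] (m - k)"
proof -
  have "g [^] m = g [^] k \<otimes> g [^] (m - k)" using assms g by (simp add: nat_pow_mult)
  then show ?thesis using assms g by (simp add: m_assoc)
qed

lemma decomposition_unique:
  assumes "h1 \<in> H" "h2 \<in> H" "i < k" "j < k" "h1 \<otimes> g [^] i = h2 \<otimes> g [^] j"
  shows "h1 = h2 \<and> i = j"
proof -
  have *: "h1 = h2 \<and> i = j"
    if "h1 \<in> H" "h2 \<in> H" "i \<le> j" "j < k" "h1 \<otimes> g [^] i = h2 \<otimes> g [^] j" for h1 h2 i j
  proof -
    have "h1 \<otimes> g [^] i = (h2 \<otimes> g [^] (j - i)) \<otimes> g [^] i"
      using that g H_carrier by (simp add: m_assoc nat_pow_mult)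
    then have h1: "h1 = h2 \<otimes> g [^] (j - i)" using that g H_carrier by simp
    then have "g [^] (j - i) = inv h2 \<otimes> h1" using that g H_carrier by (simp add: m_assoc[symmetric])
    then have "g [^] (j - i) \<in> H"
      using that subgroup_H by (simp add: subgroup.m_closed subgroup.m_inv_closed)
    then have "i = j" using pow_not_in[of "j - i"] that by linarith
    then show ?thesis using h1 g H_carrier that by simp
  qed
  show ?thesis using *[of h1 h2 i j] *[of h2 h1 j i] assms by (cases "i \<le> j") auto
qed

lemma inj_on_decomposition: "inj_on (\<lambda>(h, i). h \<otimes> g [^] i) (H \<times> {..<k})"
  using decomposition_unique by (auto intro!: inj_onI)

lemma card_adjoined: "card adjoined = card H * k"
  using inj_on_decomposition by (simp add: adjoined_def card_image card_cartesian_product)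

lemma mult_pow_in_adjoined: "h \<in> H \<Longrightarrow> h \<otimes> g [^] (m::nat) \<in> adjoined"
proof (induction m arbitrary: h rule: less_induct)
  case (less m)
  show ?case
  proof (cases "m < k")
    case True then show ?thesis using less.prems by (force simp: adjoined_def)
  next
    case False
    then have "h \<otimes> g [^] m = (h \<otimes> g [^] k) \<otimes> g [^] (m - k)"
      using less.prems H_carrier by (intro mult_pow_reduce) auto
    moreover have "h \<otimes> g [^] k \<in> H" using less.prems pow_k subgroup.m_closed[OF subgroup_H] by blast
    ultimately show ?thesis using less.IH[of "m - k"] k_pos False by simp
  qed
qed

lemma adjoinedE:
  assumes "x \<in> adjoined"
  obtains h i where "h \<in> H" "i < k" "x = h \<otimes> g [^] i"
  using assms by (auto simp: adjoined_def)

lemma subgroup_adjoined: "subgroup adjoined G"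
proof (rule subgroupI)
  show "adjoined \<subseteq> carrier G" using g H_carrier by (auto elim: adjoinedE)
  show "adjoined \<noteq> {}" using mult_pow_in_adjoined subgroup.one_closed[OF subgroup_H] by blast
next
  fix x assume "x \<in> adjoined"
  then obtain h i where hi: "h \<in> H" "i < k" "x = h \<otimes> g [^] i" by (rule adjoinedE)
  have "(inv (g [^] k) \<otimes> g [^] (k - i)) \<otimes> g [^] i = inv (g [^] k) \<otimes> g [^] k"
    using g hi(2) by (simp add: m_assoc nat_pow_mult)
  then have "inv (g [^] i) = inv (g [^] k) \<otimes> g [^] (k - i)"
    using g by (intro inv_equality) auto
  then have "inv x = (inv h \<otimes> inv (g [^] k)) \<otimes> g [^] (k - i)"
    using hi g H_carrier by (simp add: inv_mult m_assoc)
  moreover have "inv h \<otimes> inv (g [^] k) \<in> H"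
    using hi(1) pow_k subgroup_H by (intro subgroup.m_closed subgroup.m_inv_closed)
  ultimately show "inv x \<in> adjoined" using mult_pow_in_adjoined by simp
next
  fix x y assume "x \<in> adjoined" "y \<in> adjoined"
  then obtain h1 i h2 j where "h1 \<in> H" "x = h1 \<otimes> g [^] (i::nat)" "h2 \<in> H" "y = h2 \<otimes> g [^] (j::nat)"
    by (elim adjoinedE) blast
  moreover from this have "x \<otimes> y = (h1 \<otimes> h2) \<otimes> g [^] (i + j)"
    using g H_carrier by (simp add: m_ac nat_pow_mult)
  moreover have "h1 \<otimes> h2 \<in> H" using calculation subgroup_H by (intro subgroup.m_closed)
  ultimately show "x \<otimes> y \<in> adjoined" using mult_pow_in_adjoined by simp
qed

lemma H_subset_adjoined: "H \<subseteq> adjoined"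
  using mult_pow_in_adjoined[of _ 0] H_carrier by auto

lemma pow_in_adjoined: "g [^] (i::nat) \<in> adjoined"
  using mult_pow_in_adjoined[of \<one> i] subgroup.one_closed[OF subgroup_H] g by simp

lemma character_adjoined_mult_pow:
  assumes \<psi>: "\<psi> \<in> characters adjoined (mult G)" and h: "h \<in> H"
  shows "\<psi> (h \<otimes> g [^] i) = \<psi> h * (\<psi> g :: 'f::field) ^ i"
proof -
  have "\<psi> (h \<otimes> g [^] i) = \<psi> h * \<psi> (g [^] i)"
    using \<psi> h H_subset_adjoined pow_in_adjoined by (auto simp: characters_def)
  also have "\<psi> (g [^] i) = \<psi> g ^ i"
    using character_nat_pow[OF subgroup_adjoined \<psi>, of g] pow_in_adjoined[of 1] g by simp
  finally show ?thesis .
qed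

lemma character_adjoined_eqI:
  fixes \<psi>1 \<psi>2 :: "'a \<Rightarrow> 'f::field"
  assumes \<psi>: "\<psi>1 \<in> characters adjoined (mult G)" "\<psi>2 \<in> characters adjoined (mult G)"
    and on_H: "\<And>h. h \<in> H \<Longrightarrow> \<psi>1 h = \<psi>2 h" and on_g: "\<psi>1 g = \<psi>2 g"
  shows "\<psi>1 = \<psi>2"
proof
  fix x show "\<psi>1 x = \<psi>2 x"
  proof (cases "x \<in> adjoined")
    case True
    then obtain h i where "h \<in> H" "x = h \<otimes> g [^] (i::nat)" by (elim adjoinedE)
    then show ?thesis
      using character_adjoined_mult_pow[OF \<psi>(1)] character_adjoined_mult_pow[OF \<psi>(2)] on_H on_g
      by simp
  qed (use \<psi> in \<open>simp add: characters_def\<close>)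
qed

lemma restrict_character_adjoined:
  assumes "\<psi> \<in> characters adjoined (mult G)"
  shows "(\<lambda>x. if x \<in> H then \<psi> x else 0) \<in> characters H (mult G)"
  using assms H_subset_adjoined subgroup.m_closed[OF subgroup_H]
  by (auto simp: characters_def subset_iff)

lemma extension_mult_pow:
  fixes \<chi> \<psi> :: "'a \<Rightarrow> 'f::field"
  assumes \<chi>: "\<chi> \<in> characters H (mult G)" and root: "z ^ k = \<chi> (g [^] k)"
    and reduced: "\<And>h i. h \<in> H \<Longrightarrow> i < k \<Longrightarrow> \<psi> (h \<otimes> g [^] i) = \<chi> h * z ^ i"
    and "h \<in> H"
  shows "\<psi> (h \<otimes> g [^] m) = \<chi> h * z ^ m"
  using \<open>h \<in> H\<close>
proof (induction m arbitrary: h rule: less_induct)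
  case (less m)
  show ?case
  proof (cases "m < k")
    case False
    then have "h \<otimes> g [^] m = (h \<otimes> g [^] k) \<otimes> g [^] (m - k)"
      using less.prems H_carrier by (intro mult_pow_reduce) auto
    moreover have "h \<otimes> g [^] k \<in> H" using less.prems pow_k subgroup.m_closed[OF subgroup_H] by blast
    ultimately have "\<psi> (h \<otimes> g [^] m) = \<chi> (h \<otimes> g [^] k) * z ^ (m - k)"
      using less.IH[of "m - k"] k_pos False by simp
    also have "\<dots> = \<chi> h * z ^ (k + (m - k))"
      using \<chi> less.prems pow_k root by (simp add: characters_def power_add)
    finally show ?thesis using False by simp
  qed (use reduced less.prems in simp)
qed

lemma extend_character:
  fixes \<chi> :: "'a \<Rightarrow> 'f::field"
  assumes \<chi>: "\<chi> \<in> characters H (mult G)" and root: "z ^ k = \<chi> (g [^] k)"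
  obtains \<psi> where "\<psi> \<in> characters adjoined (mult G)" "\<And>h. h \<in> H \<Longrightarrow> \<psi> h = \<chi> h" "\<psi> g = z"
proof -
  have \<chi>_nonzero: "\<And>a. a \<in> H \<Longrightarrow> \<chi> a \<noteq> 0" using \<chi> by (simp add: characters_def)
  have "z \<noteq> 0" using root \<chi>_nonzero[OF pow_k] k_pos by (auto simp: power_0_left)
  define dec where "dec = inv_into (H \<times> {..<k}) (\<lambda>(h, i). h \<otimes> g [^] i)"
  define \<psi> where "\<psi> x = (if x \<in> adjoined then \<chi> (fst (dec x)) * z ^ snd (dec x) else 0)" for x
  have reduced: "\<psi> (h \<otimes> g [^] i) = \<chi> h * z ^ i" if "h \<in> H" "i < k" for h i
  proof -
    have "dec (h \<otimes> g [^] i) = (h, i)"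
      unfolding dec_def using inv_into_f_f[OF inj_on_decomposition, of "(h, i)"] that by simp
    then show ?thesis using mult_pow_in_adjoined[OF that(1)] by (simp add: \<psi>_def)
  qed
  have \<psi>_mult_pow: "\<psi> (h \<otimes> g [^] m) = \<chi> h * z ^ m" if "h \<in> H" for h m
    using \<chi> root reduced that by (rule extension_mult_pow)
  show ?thesis
  proof
    show "\<psi> \<in> characters adjoined (mult G)"
      unfolding characters_def
    proof (intro CollectI conjI ballI allI impI)
      fix x assume "x \<in> adjoined"
      then obtain h i where "h \<in> H" "x = h \<otimes> g [^] (i::nat)" by (elim adjoinedE)
      then show "\<psi> x \<noteq> 0" using \<psi>_mult_pow \<chi>_nonzero \<open>z \<noteq> 0\<close> by simp
    next
      fix x y assume "x \<in> adjoined" "y \<in> adjoined"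
      then obtain h1 i h2 j where hij: "h1 \<in> H" "x = h1 \<otimes> g [^] (i::nat)" "h2 \<in> H" "y = h2 \<otimes> g [^] (j::nat)"
        by (elim adjoinedE) blast
      then have "x \<otimes> y = (h1 \<otimes> h2) \<otimes> g [^] (i + j)"
        using g H_carrier by (simp add: m_ac nat_pow_mult)
      then show "\<psi> (x \<otimes> y) = \<psi> x * \<psi> y"
        using hij \<chi> subgroup.m_closed[OF subgroup_H, of h1 h2]
        by (simp add: \<psi>_mult_pow characters_def power_add)
    next
      fix x assume "x \<notin> adjoined" then show "\<psi> x = 0" by (simp add: \<psi>_def)
    qed
    show "\<psi> h = \<chi> h" if "h \<in> H" for h
      using \<psi>_mult_pow[OF that, of 0] that H_carrier by simp
    show "\<psi> g = z"
      using \<psi>_mult_pow[of \<one> 1] subgroup.one_closed[OF subgroup_H] g character_one[OF subgroup_H \<chi>]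
      by simp
  qed
qed

lemma card_characters_adjoined:
  fixes CH :: "'a set \<Rightarrow> ('a \<Rightarrow> 'f::{alg_closed_field, field_char_0}) set"
  defines "CH H' \<equiv> characters H' (mult G)"
  assumes "finite (CH H)"
  shows "card (CH adjoined) = k * card (CH H)"
proof -
  define R where "R \<chi> = {z. z ^ k = \<chi> (g [^] k)}" for \<chi> :: "'a \<Rightarrow> 'f"
  define restrict where "restrict \<psi> = ((\<lambda>x. if x \<in> H then \<psi> x else 0), \<psi> g)" for \<psi> :: "'a \<Rightarrow> 'f"
  have "bij_betw restrict (CH adjoined) (Sigma (CH H) R)"
  proof (rule bij_betw_imageI)
    show "inj_on restrict (CH adjoined)"
      by (rule inj_onI, rule character_adjoined_eqI)
        (auto simp: CH_def restrict_def fun_eq_iff split: if_splits)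
    show "restrict ` CH adjoined = Sigma (CH H) R"
    proof (intro equalityI subsetI)
      fix p assume "p \<in> restrict ` CH adjoined"
      then obtain \<psi> where \<psi>: "\<psi> \<in> characters adjoined (mult G)" and p: "p = restrict \<psi>"
        by (auto simp: CH_def)
      have "\<psi> g ^ k = \<psi> (g [^] k)"
        using character_nat_pow[OF subgroup_adjoined \<psi>, of g] pow_in_adjoined[of 1] g by simp
      then show "p \<in> Sigma (CH H) R"
        using p pow_k restrict_character_adjoined[OF \<psi>] by (simp add: CH_def restrict_def R_def)
    next
      fix p assume "p \<in> Sigma (CH H) R"
      then obtain \<chi> z where \<chi>: "\<chi> \<in> characters H (mult G)" "z ^ k = \<chi> (g [^] k)" and p: "p = (\<chi>, z)"
        by (auto simp: CH_def R_def)
      obtain \<psi> where \<psi>: "\<psi> \<in> characters adjoined (mult G)" "\<And>h. h \<in> H \<Longrightarrow> \<psi> h = \<chi> h" "\<psi> g = z"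
        using extend_character[OF \<chi>] by blast
      have "(\<lambda>x. if x \<in> H then \<psi> x else 0) = \<chi>"
        using \<psi>(2) \<chi>(1) by (auto simp: fun_eq_iff characters_def)
      then show "p \<in> restrict ` CH adjoined" using p \<psi> by (force simp: CH_def restrict_def)
    qed
  qed
  moreover have "card (R \<chi>) = k" if "\<chi> \<in> CH H" for \<chi>
    using that pow_k k_pos card_nth_roots_alg_closed by (auto simp: CH_def R_def characters_def)
  moreover from this have "finite (R \<chi>)" if "\<chi> \<in> CH H" for \<chi>
    using that k_pos card_ge_0_finite by force
  ultimately show ?thesis
    using assms(2) by (simp add: bij_betw_same_card card_SigmaI)
qed

end

lemma (in comm_group) card_characters:
  assumes fin: "finite (carrier G)"
  shows "card (characters (carrier G) (mult G) :: ('a \<Rightarrow> 'f::{alg_closed_field, field_char_0}) set) =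
    card (carrier G)"
proof -
  let ?CH = "\<lambda>H. characters H (mult G) :: ('a \<Rightarrow> 'f) set"
  have "card (?CH (carrier G)) = card (carrier G)" if "subgroup H G" "card (?CH H) = card H" for H
    using that
  proof (induction "card (carrier G) - card H" arbitrary: H rule: less_induct)
    case less
    show ?case
    proof (cases "H = carrier G")
      case False
      then obtain g where g: "g \<in> carrier G" "g \<notin> H" using subgroup.subset[OF less.prems(1)] by blast
      have "0 < card (carrier G)" using fin by (auto simp: card_gt_0_iff)
      moreover have "g [^] card (carrier G) \<in> H"
        using power_order_eq_one[OF fin g(1)] subgroup.one_closed[OF less.prems(1)] by simp
      ultimately have ex: "\<exists>i::nat. 0 < i \<and> g [^] i \<in> H" by blast
      define k where "k = (LEAST i::nat. 0 < i \<and> g [^] i \<in> H)"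
      interpret adjoin: subgroup_adjoin G H g k
        using LeastI_ex[OF ex] not_less_Least[of _ "\<lambda>i::nat. 0 < i \<and> g [^] i \<in> H"] less.prems g
        by (intro subgroup_adjoin.intro subgroup_adjoin_axioms.intro comm_group_axioms) (auto simp: k_def)
      have "k \<noteq> 1" using adjoin.pow_k g by auto
      have "finite H" using fin subgroup.subset[OF less.prems(1)] finite_subset by blast
      then have "0 < card H" using subgroup.one_closed[OF less.prems(1)] card_gt_0_iff by blast
      then have "finite (?CH H)" using less.prems(2) card_gt_0_iff by metis
      have "card H < card adjoin.adjoined"
        using adjoin.card_adjoined \<open>k \<noteq> 1\<close> adjoin.k_pos \<open>0 < card H\<close> by simp
      moreover have "card adjoin.adjoined \<le> card (carrier G)"
        using subgroup.subset[OF adjoin.subgroup_adjoined] fin by (rule card_mono[rotated])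
      moreover have "card (?CH adjoin.adjoined) = card adjoin.adjoined"
        using adjoin.card_characters_adjoined[OF \<open>finite (?CH H)\<close>] less.prems(2) adjoin.card_adjoined
        by simp
      ultimately show ?thesis using less.hyps[of adjoin.adjoined] adjoin.subgroup_adjoined by simp
    qed (use less in simp)
  qed
  then show ?thesis using triv_subgroup characters_trivial_subgroup[where 'f = 'f] by simp
qed

section \<open>Galois covers of digraphs\<close>

lemma sum_adj_count:
  assumes "finite V" "finite E" "digraph V E org t"
  shows "(\<Sum>w'\<in>V. of_nat (adj_count E org t w w') * h w') = (\<Sum>e | e \<in> E \<and> org e = w. h (t e))"
proof -
  have "(\<Sum>e | e \<in> E \<and> org e = w. h (t e)) =
      (\<Sum>w'\<in>V. \<Sum>e | e \<in> {e \<in> E. org e = w} \<and> t e = w'. h (t e))"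
    using assms by (intro sum.group[symmetric]) (auto simp: digraph_def)
  also have "\<dots> = (\<Sum>w'\<in>V. of_nat (adj_count E org t w w') * h w')"
    unfolding adj_count_def by (intro sum.cong) (auto simp: conj_ac)
  finally show ?thesis by simp
qed

lemma of_int_g_dg:
  "map_poly of_int (g_dg V E org t) =
    det_on V (rev_char_mat (\<lambda>v w. of_nat (adj_count E org t v w) :: 'f::comm_ring_1))"
proof -
  have "map_poly of_int ((if a = b then 1 else 0) - [:0, of_nat n:]) =
      ((if a = b then 1 else 0) - [:0, of_nat n:] :: 'f poly)" for a b :: 'a and n
    by (rule poly_eqI) (simp add: coeff_map_poly coeff_pCons split: nat.split)
  then show ?thesis unfolding g_dg_def of_int_poly_hom.hom_det_on rev_char_mat_def by simp
qed

type_synonym ('v, 'e) dg_aut = "('v \<Rightarrow> 'v) \<times> ('e \<Rightarrow> 'e)"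

locale galois_digraph_cover =
  fixes VY :: "'v set" and EdY :: "'e set" and oY tY :: "'e \<Rightarrow> 'v"
    and VX :: "'x set" and EdX :: "'d set" and oX tX :: "'d \<Rightarrow> 'x"
    and fV :: "'v \<Rightarrow> 'x" and fE :: "'e \<Rightarrow> 'd"
  assumes finite_VY: "finite VY" and finite_EdY: "finite EdY" and finite_VX: "finite VX"
    and digraph_Y: "digraph VY EdY oY tY"
    and galois: "galois_cover VY EdY oY tY VX EdX oX tX fV fE"
begin

abbreviation Gal :: "('v, 'e) dg_aut set" where
  "Gal \<equiv> Aut_cover VY EdY oY tY fV fE"

definition Gal_group :: "('v, 'e) dg_aut monoid" where
  "Gal_group = \<lparr>carrier = Gal, mult = aut_comp, one = (id, id)\<rparr>"

lemma Gal_group_simps [simp]: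
  "carrier Gal_group = Gal" "mult Gal_group = aut_comp" "one Gal_group = (id, id)"
  by (simp_all add: Gal_group_def)

lemma edge_in_Y: "e \<in> EdY \<Longrightarrow> oY e \<in> VY \<and> tY e \<in> VY"
  using digraph_Y by (simp add: digraph_def)

lemma fV_image: "fV ` VY = VX"
  and cover_out_edges: "w \<in> VY \<Longrightarrow> bij_betw fE {e \<in> EdY. oY e = w} {e \<in> EdX. oX e = fV w}"
  and cover_edge: "e \<in> EdY \<Longrightarrow> oX (fE e) = fV (oY e) \<and> tX (fE e) = fV (tY e)"
  using galois by (auto simp: galois_cover_def is_cover_def dg_morphism_def)

lemma Gal_transitive_on_fibres:
  "w \<in> VY \<Longrightarrow> w' \<in> VY \<Longrightarrow> fV w = fV w' \<Longrightarrow> \<exists>\<sigma>\<in>Gal. fst \<sigma> w = w'"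
  using galois by (simp add: galois_cover_def)

lemma mem_Gal_iff:
  "\<sigma> \<in> Gal \<longleftrightarrow> fst \<sigma> permutes VY \<and> snd \<sigma> permutes EdY \<and>
     (\<forall>e\<in>EdY. oY (snd \<sigma> e) = fst \<sigma> (oY e) \<and> tY (snd \<sigma> e) = fst \<sigma> (tY e)) \<and>
     (\<forall>w\<in>VY. fV (fst \<sigma> w) = fV w) \<and> (\<forall>e\<in>EdY. fE (snd \<sigma> e) = fE e)"
  by (auto simp: Aut_cover_def dg_automorphism_def permutes_imp_bij permutes_not_in
      intro: bij_imp_permutes)

lemma GalD:
  assumes "\<sigma> \<in> Gal"
  shows "fst \<sigma> permutes VY" "snd \<sigma> permutes EdY"
    "\<And>e. e \<in> EdY \<Longrightarrow> oY (snd \<sigma> e) = fst \<sigma> (oY e)" "\<And>e. e \<in> EdY \<Longrightarrow> tY (snd \<sigma> e) = fst \<sigma> (tY e)"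
    "\<And>w. w \<in> VY \<Longrightarrow> fV (fst \<sigma> w) = fV w" "\<And>e. e \<in> EdY \<Longrightarrow> fE (snd \<sigma> e) = fE e"
  using assms by (simp_all add: mem_Gal_iff)

lemma Gal_vertex: "\<sigma> \<in> Gal \<Longrightarrow> fst \<sigma> w \<in> VY \<longleftrightarrow> w \<in> VY"
  by (simp add: GalD(1) permutes_in_image)

lemma Gal_edge: "\<sigma> \<in> Gal \<Longrightarrow> snd \<sigma> e \<in> EdY \<longleftrightarrow> e \<in> EdY"
  by (simp add: GalD(2) permutes_in_image)

lemma Gal_comp: "\<sigma> \<in> Gal \<Longrightarrow> \<tau> \<in> Gal \<Longrightarrow> aut_comp \<sigma> \<tau> \<in> Gal"
  by (auto simp: mem_Gal_iff aut_comp_def permutes_compose permutes_in_image)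

lemma Gal_inv:
  assumes \<sigma>: "\<sigma> \<in> Gal"
  shows "(inv_into UNIV (fst \<sigma>), inv_into UNIV (snd \<sigma>)) \<in> Gal"
proof -
  let ?a = "inv_into UNIV (fst \<sigma>)" and ?b = "inv_into UNIV (snd \<sigma>)"
  note a = GalD(1)[OF \<sigma>] and b = GalD(2)[OF \<sigma>]
  have "oY (?b e) = ?a (oY e) \<and> tY (?b e) = ?a (tY e) \<and> fE (?b e) = fE e" if "e \<in> EdY" for e
    using GalD(3,4,6)[OF \<sigma>, of "?b e"] that permutes_inverses[OF a] permutes_inverses[OF b]
      permutes_in_image[OF permutes_inv[OF b]] by metis
  moreover have "fV (?a w) = fV w" if "w \<in> VY" for w
    using GalD(5)[OF \<sigma>, of "?a w"] that permutes_inverses(1)[OF a]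
      permutes_in_image[OF permutes_inv[OF a]] by simp
  ultimately show ?thesis using permutes_inv[OF a] permutes_inv[OF b] by (simp add: mem_Gal_iff)
qed

lemma group_Gal_group: "group Gal_group"
proof (rule groupI)
  show "\<sigma> \<otimes>\<^bsub>Gal_group\<^esub> \<tau> \<in> carrier Gal_group"
    if "\<sigma> \<in> carrier Gal_group" "\<tau> \<in> carrier Gal_group" for \<sigma> \<tau>
    using that by (simp add: Gal_comp)
  show "\<one>\<^bsub>Gal_group\<^esub> \<in> carrier Gal_group" by (simp add: mem_Gal_iff)
  fix \<sigma> assume \<sigma>: "\<sigma> \<in> carrier Gal_group"
  show "\<one>\<^bsub>Gal_group\<^esub> \<otimes>\<^bsub>Gal_group\<^esub> \<sigma> = \<sigma>" by (simp add: aut_comp_def)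
  have "aut_comp (inv_into UNIV (fst \<sigma>), inv_into UNIV (snd \<sigma>)) \<sigma> = (id, id)"
    using permutes_inv_o(2)[OF GalD(1)] permutes_inv_o(2)[OF GalD(2)] \<sigma> by (simp add: aut_comp_def)
  then show "\<exists>\<tau>\<in>carrier Gal_group. \<tau> \<otimes>\<^bsub>Gal_group\<^esub> \<sigma> = \<one>\<^bsub>Gal_group\<^esub>"
    using Gal_inv \<sigma> by force
qed (simp add: aut_comp_def o_assoc)

lemma finite_Gal: "finite Gal"
proof (rule finite_subset)
  show "Gal \<subseteq> {p. p permutes VY} \<times> {q. q permutes EdY}"
    by (auto simp: mem_Gal_iff)
  show "finite ({p. p permutes VY} \<times> {q. q permutes EdY})"
    using finite_VY finite_EdY by (simp add: finite_permutations)
qed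

lemma card_Gal_pos: "0 < card Gal"
proof -
  have "(id, id) \<in> Gal" by (simp add: mem_Gal_iff)
  then show ?thesis using finite_Gal by (auto simp: card_gt_0_iff)
qed

lemma trivial_character_Gal: "trivial_character Gal \<in> characters Gal aut_comp"
  using Gal_comp by (simp add: characters_def trivial_character_def)

text \<open>The action is free because the cover is injective on the edges leaving a vertex, so an
  automorphism fixing the origin of an edge fixes the edge; strong connectivity propagates this.\<close>

lemma Gal_fixes_edge:
  assumes \<sigma>: "\<sigma> \<in> Gal" and e: "e \<in> EdY" and fixed: "fst \<sigma> (oY e) = oY e"
  shows "snd \<sigma> e = e" "fst \<sigma> (tY e) = tY e"
proof -
  have "inj_on fE {e' \<in> EdY. oY e' = oY e}"
    using cover_out_edges edge_in_Y[OF e] by (simp add: bij_betw_def)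
  moreover have "snd \<sigma> e \<in> {e' \<in> EdY. oY e' = oY e}"
    using Gal_edge[OF \<sigma>] GalD(3)[OF \<sigma> e] e fixed by simp
  ultimately show "snd \<sigma> e = e" using e GalD(6)[OF \<sigma> e] by (auto dest: inj_onD)
  then show "fst \<sigma> (tY e) = tY e" using GalD(4)[OF \<sigma> e] by simp
qed

lemma Gal_free:
  assumes \<sigma>: "\<sigma> \<in> Gal" and w: "w \<in> VY" and fixed: "fst \<sigma> w = w"
  shows "\<sigma> = (id, id)"
proof -
  let ?R = "{(oY e, tY e) | e. e \<in> EdY}"
  have "fst \<sigma> y = y" if "(x, y) \<in> ?R\<^sup>+" "fst \<sigma> x = x" for x y
    using that by (induction rule: trancl_induct) (auto dest: Gal_fixes_edge[OF \<sigma>])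
  moreover have "(w, y) \<in> ?R\<^sup>+" if "y \<in> VY" "y \<noteq> w" for y
    using galois w that by (simp add: galois_cover_def strongly_connected_def)
  ultimately have vertices: "fst \<sigma> y = y" for y
    using fixed GalD(1)[OF \<sigma>] by (cases "y \<in> VY \<and> y \<noteq> w") (auto simp: permutes_not_in)
  have "snd \<sigma> e = e" for e
    using Gal_fixes_edge(1)[OF \<sigma> _ vertices] GalD(2)[OF \<sigma>] by (cases "e \<in> EdY") (auto simp: permutes_not_in)
  with vertices show ?thesis by (simp add: prod_eq_iff fun_eq_iff)
qed

lemma Gal_eqI:
  assumes \<sigma>: "\<sigma> \<in> Gal" and \<tau>: "\<tau> \<in> Gal" and w: "w \<in> VY" and eq: "fst \<sigma> w = fst \<tau> w"
  shows "\<sigma> = \<tau>"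
proof -
  let ?\<tau>' = "(inv_into UNIV (fst \<tau>), inv_into UNIV (snd \<tau>))"
  have "aut_comp ?\<tau>' \<sigma> \<in> Gal" using Gal_comp Gal_inv \<sigma> \<tau> by blast
  moreover have "fst (aut_comp ?\<tau>' \<sigma>) w = w"
    using eq GalD(1)[OF \<tau>] by (simp add: aut_comp_def permutes_inverses)
  ultimately have "aut_comp ?\<tau>' \<sigma> = (id, id)" using Gal_free w by blast
  then have "inv_into UNIV (fst \<tau>) \<circ> fst \<sigma> = id" "inv_into UNIV (snd \<tau>) \<circ> snd \<sigma> = id"
    by (simp_all add: aut_comp_def)
  then have "fst \<sigma> x = fst \<tau> x" "snd \<sigma> y = snd \<tau> y" for x y
    using permutes_inverses(1)[OF GalD(1)[OF \<tau>], of "fst \<sigma> x"]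
      permutes_inverses(1)[OF GalD(2)[OF \<tau>], of "snd \<sigma> y"] by (simp_all add: fun_eq_iff)
  then show ?thesis by (simp add: prod_eq_iff fun_eq_iff)
qed

abbreviation base :: "'x \<Rightarrow> 'v" where
  "base \<equiv> vsection VY fV"

lemma base_in_fibre: "v \<in> VX \<Longrightarrow> base v \<in> VY \<and> fV (base v) = v"
  using fV_image someI_ex[of "\<lambda>w. w \<in> VY \<and> fV w = v"] by (auto simp: vsection_def)

text \<open>Since \<open>Gal\<close> acts freely and transitively on each fibre, every vertex is the image of the
  base point of its fibre under a unique \<open>label w\<close>, and \<open>w \<mapsto> (fV w, label w)\<close> identifies
  \<open>VY\<close> with \<open>VX \<times> Gal\<close>.\<close>

definition label :: "'v \<Rightarrow> ('v, 'e) dg_aut" where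
  "label w = (THE \<sigma>. \<sigma> \<in> Gal \<and> fst \<sigma> (base (fV w)) = w)"

lemma label_unique:
  assumes w: "w \<in> VY" and \<sigma>: "\<sigma> \<in> Gal" and "fst \<sigma> (base (fV w)) = w"
  shows "label w = \<sigma>"
  unfolding label_def
proof (rule the_equality)
  have "base (fV w) \<in> VY" using base_in_fibre w by (simp add: fV_image[symmetric])
  then show "\<tau> = \<sigma>" if "\<tau> \<in> Gal \<and> fst \<tau> (base (fV w)) = w" for \<tau>
    using that assms Gal_eqI[of \<tau> \<sigma> "base (fV w)"] by simp
qed (use assms in simp)

lemma label_in_Gal_maps_base:
  assumes w: "w \<in> VY"
  shows "label w \<in> Gal" "fst (label w) (base (fV w)) = w"
proof -
  have "base (fV w) \<in> VY" "fV (base (fV w)) = fV w" using base_in_fibre w by (simp_all add: fV_image[symmetric])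
  then obtain \<sigma> where "\<sigma> \<in> Gal" "fst \<sigma> (base (fV w)) = w"
    using Gal_transitive_on_fibres w by blast
  with label_unique[OF w] show "label w \<in> Gal" "fst (label w) (base (fV w)) = w" by simp_all
qed

lemma label_base:
  assumes v: "v \<in> VX" and \<sigma>: "\<sigma> \<in> Gal"
  shows "label (fst \<sigma> (base v)) = \<sigma>"
proof (rule label_unique[OF _ \<sigma>])
  show "fst \<sigma> (base v) \<in> VY" using base_in_fibre[OF v] Gal_vertex[OF \<sigma>] by simp
  then show "fst \<sigma> (base (fV (fst \<sigma> (base v)))) = fst \<sigma> (base v)"
    using base_in_fibre[OF v] GalD(5)[OF \<sigma>] by simp
qed

lemma label_Gal_action:
  assumes \<rho>: "\<rho> \<in> Gal" and w: "w \<in> VY"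
  shows "label (fst \<rho> w) = aut_comp \<rho> (label w)"
proof (rule label_unique)
  show "fst \<rho> w \<in> VY" "aut_comp \<rho> (label w) \<in> Gal"
    using Gal_vertex[OF \<rho>] Gal_comp[OF \<rho> label_in_Gal_maps_base(1)[OF w]] w by simp_all
  show "fst (aut_comp \<rho> (label w)) (base (fV (fst \<rho> w))) = fst \<rho> w"
    using label_in_Gal_maps_base(2)[OF w] GalD(5)[OF \<rho> w] by (simp add: aut_comp_def)
qed

lemma edge_elem_eq_label: "edge_elem VY EdY oY tY fV fE \<epsilon> = label (tY \<epsilon>)"
  by (simp add: edge_elem_def label_def)

lemma bij_betw_fibre: "v \<in> VX \<Longrightarrow> bij_betw (\<lambda>\<sigma>. fst \<sigma> (base v)) Gal {w \<in> VY. fV w = v}"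
proof (rule bij_betw_byWitness[of _ label])
  assume v: "v \<in> VX"
  show "\<forall>\<sigma>\<in>Gal. label (fst \<sigma> (base v)) = \<sigma>" using label_base[OF v] by blast
  show "\<forall>w\<in>{w \<in> VY. fV w = v}. fst (label w) (base v) = w" using label_in_Gal_maps_base(2) by blast
  show "(\<lambda>\<sigma>. fst \<sigma> (base v)) ` Gal \<subseteq> {w \<in> VY. fV w = v}"
    using base_in_fibre[OF v] Gal_vertex GalD(5) by auto
  show "label ` {w \<in> VY. fV w = v} \<subseteq> Gal" using label_in_Gal_maps_base(1) by blast
qed

lemma card_VY: "card VY = card VX * card Gal"
proof -
  have "card VY = (\<Sum>v\<in>VX. card {w \<in> VY. fV w = v})"
    using sum.group[of VY VX fV "\<lambda>_. 1::nat"] finite_VX finite_VY fV_image by simp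
  also have "\<dots> = (\<Sum>v\<in>VX. card Gal)"
    by (intro sum.cong) (simp_all add: bij_betw_same_card[OF bij_betw_fibre])
  finally show ?thesis by simp
qed

definition twisted_adj :: "(('v, 'e) dg_aut \<Rightarrow> 'f::field) \<Rightarrow> 'x \<Rightarrow> 'x \<Rightarrow> 'f" where
  "twisted_adj \<psi> v v' = (\<Sum>\<epsilon>\<in>{\<epsilon>\<in>EdY. oY \<epsilon> = base v \<and> fV (tY \<epsilon>) = v'}. \<psi> (label (tY \<epsilon>)))"

lemma g_twisted_eq_det_on: "g_twisted VY EdY oY tY VX fV fE \<psi> = det_on VX (rev_char_mat (twisted_adj \<psi>))"
  by (simp add: g_twisted_def twisted_adj_def rev_char_mat_def[abs_def] edge_elem_eq_label)

lemma twisted_adj_trivial_character: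
  assumes v: "v \<in> VX"
  shows "twisted_adj (trivial_character Gal) v v' = of_nat (adj_count EdX oX tX v v')"
proof -
  let ?E = "{\<epsilon>\<in>EdY. oY \<epsilon> = base v \<and> fV (tY \<epsilon>) = v'}"
  have "twisted_adj (trivial_character Gal) v v' = of_nat (card ?E)"
    using label_in_Gal_maps_base(1) edge_in_Y by (simp add: twisted_adj_def trivial_character_def)
  also have "card ?E = adj_count EdX oX tX v v'"
  proof -
    have out: "bij_betw fE {e \<in> EdY. oY e = base v} {d \<in> EdX. oX d = v}"
      using cover_out_edges[of "base v"] base_in_fibre[OF v] by simp
    then have "inj_on fE ?E" by (rule bij_betw_imp_inj_on[THEN inj_on_subset]) auto
    moreover have "fE ` ?E = {d \<in> EdX. oX d = v \<and> tX d = v'}"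
    proof (intro equalityI subsetI)
      fix d assume "d \<in> fE ` ?E"
      then show "d \<in> {d \<in> EdX. oX d = v \<and> tX d = v'}"
        using out cover_edge base_in_fibre[OF v] by (auto simp: bij_betw_def)
    next
      fix d assume d: "d \<in> {d \<in> EdX. oX d = v \<and> tX d = v'}"
      then have "d \<in> fE ` {e \<in> EdY. oY e = base v}" using out by (simp add: bij_betw_def)
      then obtain e where "e \<in> EdY" "oY e = base v" "fE e = d" by blast
      then show "d \<in> fE ` ?E" using d cover_edge by force
    qed
    ultimately show ?thesis by (simp add: adj_count_def card_image[symmetric])
  qed
  finally show ?thesis .
qed

lemma Gal_bij_betw_out_edges:
  assumes \<rho>: "\<rho> \<in> Gal"
  shows "bij_betw (snd \<rho>) {e\<in>EdY. oY e = u \<and> fV (tY e) = v'} {e\<in>EdY. oY e = fst \<rho> u \<and> fV (tY e) = v'}"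
proof -
  let ?a' = "inv_into UNIV (fst \<rho>)" and ?b' = "inv_into UNIV (snd \<rho>)"
  have \<rho>': "(?a', ?b') \<in> Gal" by (rule Gal_inv[OF \<rho>])
  have "?a' (fst \<rho> u) = u" using permutes_inverses(2)[OF GalD(1)[OF \<rho>]] .
  show ?thesis
  proof (rule bij_betw_byWitness[of _ ?b'])
    show "\<forall>e\<in>{e\<in>EdY. oY e = u \<and> fV (tY e) = v'}. ?b' (snd \<rho> e) = e"
      "\<forall>e\<in>{e\<in>EdY. oY e = fst \<rho> u \<and> fV (tY e) = v'}. snd \<rho> (?b' e) = e"
      using permutes_inverses[OF GalD(2)[OF \<rho>]] by simp_all
    show "snd \<rho> ` {e\<in>EdY. oY e = u \<and> fV (tY e) = v'} \<subseteq> {e\<in>EdY. oY e = fst \<rho> u \<and> fV (tY e) = v'}"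
      using Gal_edge[OF \<rho>] GalD(3,4,5)[OF \<rho>] edge_in_Y by auto
    show "?b' ` {e\<in>EdY. oY e = fst \<rho> u \<and> fV (tY e) = v'} \<subseteq> {e\<in>EdY. oY e = u \<and> fV (tY e) = v'}"
      using \<open>?a' (fst \<rho> u) = u\<close> Gal_edge[OF \<rho>'] GalD(3,4,5)[OF \<rho>'] edge_in_Y by auto
  qed
qed

definition fibre_character :: "'v \<Rightarrow> 'x \<times> (('v, 'e) dg_aut \<Rightarrow> 'f::field) \<Rightarrow> 'f" where
  "fibre_character w = (\<lambda>(v, \<phi>). if fV w = v then \<phi> (label w) else 0)"

text \<open>Moving the edges at \<open>base (fV w)\<close> to \<open>w\<close> by \<open>label w\<close> multiplies the label of every
  terminus by \<open>label w\<close>, so \<open>A\<^sub>Y\<close> acts on the fibre characters through \<open>twisted_adj\<close>.\<close>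

lemma adj_fibre_character:
  fixes \<phi> :: "('v, 'e) dg_aut \<Rightarrow> 'f::field"
  assumes w: "w \<in> VY" and \<phi>: "\<phi> \<in> characters Gal aut_comp"
  shows "(\<Sum>w'\<in>VY. of_nat (adj_count EdY oY tY w w') * fibre_character w' (v', \<phi>)) =
    \<phi> (label w) * twisted_adj \<phi> (fV w) v'"
proof -
  define \<rho> where "\<rho> = label w"
  have \<rho>: "\<rho> \<in> Gal" "fst \<rho> (base (fV w)) = w" using label_in_Gal_maps_base[OF w] by (simp_all add: \<rho>_def)
  let ?E = "{\<epsilon>\<in>EdY. oY \<epsilon> = base (fV w) \<and> fV (tY \<epsilon>) = v'}"
  have "(\<Sum>w'\<in>VY. of_nat (adj_count EdY oY tY w w') * fibre_character w' (v', \<phi>)) =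
      (\<Sum>e | e \<in> EdY \<and> oY e = w. if fV (tY e) = v' then \<phi> (label (tY e)) else 0)"
    unfolding fibre_character_def prod.case by (rule sum_adj_count[OF finite_VY finite_EdY digraph_Y])
  also have "\<dots> = (\<Sum>e | e \<in> EdY \<and> oY e = fst \<rho> (base (fV w)) \<and> fV (tY e) = v'. \<phi> (label (tY e)))"
    using finite_EdY \<rho>(2) by (simp add: sum.inter_filter[symmetric] conj_ac)
  also have "\<dots> = (\<Sum>\<epsilon>\<in>?E. \<phi> (label (tY (snd \<rho> \<epsilon>))))"
    using sum.reindex_bij_betw[OF Gal_bij_betw_out_edges[OF \<rho>(1)], of "\<lambda>e. \<phi> (label (tY e))"] by simp
  also have "\<dots> = (\<Sum>\<epsilon>\<in>?E. \<phi> \<rho> * \<phi> (label (tY \<epsilon>)))"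
  proof (rule sum.cong[OF refl])
    fix \<epsilon> assume "\<epsilon> \<in> ?E"
    then have "label (tY (snd \<rho> \<epsilon>)) = aut_comp \<rho> (label (tY \<epsilon>))" "label (tY \<epsilon>) \<in> Gal"
      using GalD(4)[OF \<rho>(1)] label_Gal_action[OF \<rho>(1)] label_in_Gal_maps_base(1) edge_in_Y by simp_all
    then show "\<phi> (label (tY (snd \<rho> \<epsilon>))) = \<phi> \<rho> * \<phi> (label (tY \<epsilon>))"
      using \<phi> \<rho>(1) by (simp add: characters_def)
  qed
  also have "\<dots> = \<phi> \<rho> * twisted_adj \<phi> (fV w) v'"
    by (simp add: twisted_adj_def sum_distrib_left)
  finally show ?thesis by (simp add: \<rho>_def)
qed

lemma fibre_character_orthogonality:
  fixes \<phi> \<psi> :: "('v, 'e) dg_aut \<Rightarrow> 'f::field"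
  assumes v: "v \<in> VX" and \<phi>: "\<phi> \<in> characters Gal aut_comp" and \<psi>: "\<psi> \<in> characters Gal aut_comp"
  shows "(\<Sum>w\<in>VY. fibre_character w (v, \<lambda>\<sigma>. inverse (\<phi> \<sigma>)) * fibre_character w (v', \<psi>)) =
    (if (v, \<phi>) = (v', \<psi>) then of_nat (card Gal) else 0)"
proof -
  have "(\<Sum>w\<in>VY. fibre_character w (v, \<lambda>\<sigma>. inverse (\<phi> \<sigma>)) * fibre_character w (v', \<psi>)) =
      (\<Sum>w\<in>VY. if fV w = v \<and> v = v' then inverse (\<phi> (label w)) * \<psi> (label w) else 0)"
    by (rule sum.cong) (auto simp: fibre_character_def)
  also have "\<dots> = (if v = v' then \<Sum>w\<in>{w \<in> VY. fV w = v}. inverse (\<phi> (label w)) * \<psi> (label w) else 0)"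
    using finite_VY by (simp add: sum.inter_filter)
  also have "(\<Sum>w\<in>{w \<in> VY. fV w = v}. inverse (\<phi> (label w)) * \<psi> (label w)) =
      (\<Sum>\<sigma>\<in>Gal. inverse (\<phi> (label (fst \<sigma> (base v)))) * \<psi> (label (fst \<sigma> (base v))))"
    by (rule sum.reindex_bij_betw[OF bij_betw_fibre[OF v], symmetric])
  also have "\<dots> = (\<Sum>\<sigma>\<in>Gal. inverse (\<phi> \<sigma>) * \<psi> \<sigma>)"
    using label_base[OF v] by (intro sum.cong) auto
  also have "\<dots> = (if \<phi> = \<psi> then of_nat (card Gal) else 0)"
    using group.character_orthogonality[OF group_Gal_group, of \<phi> \<psi>] finite_Gal \<phi> \<psi> by simp
  finally show ?thesis by simp
qed

definition twisted_adj_blocks :: "'x \<times> (('v, 'e) dg_aut \<Rightarrow> 'f::field) \<Rightarrow> 'x \<times> (_ \<Rightarrow> 'f) \<Rightarrow> 'f" where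
  "twisted_adj_blocks = (\<lambda>(v, \<phi>) (v', \<psi>). if \<phi> = \<psi> then twisted_adj \<phi> v v' else 0)"

lemma adj_intertwines_fibre_characters:
  fixes CH :: "(('v, 'e) dg_aut \<Rightarrow> 'f::field) set"
  assumes "finite CH" "CH \<subseteq> characters Gal aut_comp" and w: "w \<in> VY" and j: "j \<in> VX \<times> CH"
  shows "(\<Sum>w'\<in>VY. of_nat (adj_count EdY oY tY w w') * fibre_character w' j) =
    (\<Sum>i\<in>VX \<times> CH. fibre_character w i * twisted_adj_blocks i j)"
proof -
  obtain v' \<psi> where j: "j = (v', \<psi>)" "\<psi> \<in> CH" using j by auto
  have "fV w \<in> VX" using w fV_image by blast
  have "(\<Sum>i\<in>VX \<times> CH. fibre_character w i * twisted_adj_blocks i j) =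
      (\<Sum>i\<in>VX \<times> CH. if i = (fV w, \<psi>) then \<psi> (label w) * twisted_adj \<psi> (fV w) v' else 0)"
    by (intro sum.cong) (auto simp: fibre_character_def twisted_adj_blocks_def j split: if_splits)
  also have "\<dots> = \<psi> (label w) * twisted_adj \<psi> (fV w) v'"
    using assms(1) finite_VX \<open>fV w \<in> VX\<close> j by simp
  finally show ?thesis using adj_fibre_character[OF w, of \<psi> v'] j assms(2) by auto
qed

lemma det_rev_char_mat_twisted_adj_blocks:
  assumes "finite CH"
  shows "det_on (VX \<times> CH) (rev_char_mat twisted_adj_blocks) =
    (\<Prod>\<phi>\<in>CH. det_on VX (rev_char_mat (twisted_adj \<phi>)) :: 'f::field poly)"
  unfolding twisted_adj_blocks_def rev_char_mat_block_diagonal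
  by (rule det_on_block_diagonal[OF finite_VX assms])

end

locale abelian_galois_digraph_cover = galois_digraph_cover +
  assumes Gal_commute: "\<forall>\<sigma>\<in>Gal. \<forall>\<tau>\<in>Gal. aut_comp \<sigma> \<tau> = aut_comp \<tau> \<sigma>"
begin

lemma comm_group_Gal_group: "comm_group Gal_group"
  using Gal_commute by (intro group.group_comm_groupI[OF group_Gal_group]) simp

lemma card_characters_Gal:
  "card (characters Gal aut_comp :: (_ \<Rightarrow> 'f::{alg_closed_field, field_char_0}) set) = card Gal"
  using comm_group.card_characters[OF comm_group_Gal_group] finite_Gal by simp

lemma finite_characters_Gal:
  "finite (characters Gal aut_comp :: (_ \<Rightarrow> 'f::{alg_closed_field, field_char_0}) set)"
  using card_characters_Gal[where 'f = 'f] card_Gal_pos card_gt_0_iff by metis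

theorem det_rev_char_mat_eq_prod_characters:
  "det_on VY (rev_char_mat (\<lambda>w w'. of_nat (adj_count EdY oY tY w w'))) =
    (\<Prod>\<phi>\<in>characters Gal aut_comp. det_on VX (rev_char_mat (twisted_adj \<phi>)) ::
      'f::{alg_closed_field, field_char_0} poly)"
proof -
  define CH where "CH = (characters Gal aut_comp :: (_ \<Rightarrow> 'f) set)"
  have card_CH: "card CH = card Gal" and "finite CH"
    unfolding CH_def by (rule card_characters_Gal, rule finite_characters_Gal)
  define Q where "Q = (\<lambda>(v, \<phi>) w. fibre_character w (v, \<lambda>\<sigma>. inverse (\<phi> \<sigma>)) :: 'f)"
  have "det_on VY (rev_char_mat (\<lambda>w w'. of_nat (adj_count EdY oY tY w w'))) =
      det_on (VX \<times> CH) (rev_char_mat twisted_adj_blocks)"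
  proof (rule det_on_eq_if_intertwined[where P = "\<lambda>w j. [:fibre_character w j:]"
        and Q = "\<lambda>i w. [:Q i w:]" and c = "[:of_nat (card Gal):]"])
    show "card VY = card (VX \<times> CH)" using card_VY card_CH by (simp add: card_cartesian_product)
    show "(\<Sum>w'\<in>VY. rev_char_mat (\<lambda>w w'. of_nat (adj_count EdY oY tY w w')) w w' * [:fibre_character w' j:]) =
        (\<Sum>i\<in>VX \<times> CH. [:fibre_character w i:] * rev_char_mat twisted_adj_blocks i j)"
      if "w \<in> VY" "j \<in> VX \<times> CH" for w j
      using \<open>finite CH\<close> finite_VY finite_VX that adj_intertwines_fibre_characters[of CH w j]
      by (intro rev_char_mat_intertwine) (simp_all add: CH_def)
    show "(\<Sum>w\<in>VY. [:Q i w:] * [:fibre_character w j:]) = (if i = j then [:of_nat (card Gal):] else 0)"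
      if "i \<in> VX \<times> CH" and "j \<in> VX \<times> CH" for i j
    proof -
      obtain v \<phi> v' \<psi> where ij: "i = (v, \<phi>)" "j = (v', \<psi>)" "v \<in> VX" "\<phi> \<in> CH" "\<psi> \<in> CH"
        using \<open>i \<in> VX \<times> CH\<close> \<open>j \<in> VX \<times> CH\<close> by auto
      then show ?thesis using fibre_character_orthogonality[of v \<phi> \<psi> v']
        by (simp add: Q_def CH_def sum_to_poly mult.commute)
    qed
  qed (use finite_VY finite_VX \<open>finite CH\<close> card_Gal_pos in simp_all)
  also have "\<dots> = (\<Prod>\<phi>\<in>CH. det_on VX (rev_char_mat (twisted_adj \<phi>)))"
    by (rule det_rev_char_mat_twisted_adj_blocks[OF \<open>finite CH\<close>])
  finally show ?thesis by (simp add: CH_def)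
qed

end

theorem theorem3p13:
  fixes VY :: "'v set" and EdY :: "'e set" and oY tY :: "'e \<Rightarrow> 'v"
    and VX :: "'x set" and EdX :: "'d set" and oX tX :: "'d \<Rightarrow> 'x"
    and fV :: "'v \<Rightarrow> 'x" and fE :: "'e \<Rightarrow> 'd"
  assumes "finite VY" "finite EdY" "digraph VY EdY oY tY"
    and "finite VX" "finite EdX" "digraph VX EdX oX tX"
    and "galois_cover VY EdY oY tY VX EdX oX tX fV fE"
    and "\<forall>\<sigma>\<in>Aut_cover VY EdY oY tY fV fE. \<forall>\<tau>\<in>Aut_cover VY EdY oY tY fV fE.
           aut_comp \<sigma> \<tau> = aut_comp \<tau> \<sigma>"
  shows "map_poly (of_int :: int \<Rightarrow> 'f::{alg_closed_field, field_char_0}) (g_dg VY EdY oY tY)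
       = map_poly of_int (g_dg VX EdX oX tX) *
         (\<Prod>\<psi>\<in>characters (Aut_cover VY EdY oY tY fV fE) aut_comp
               - {trivial_character (Aut_cover VY EdY oY tY fV fE)}.
            g_twisted VY EdY oY tY VX fV fE \<psi>)"
proof -
  interpret abelian_galois_digraph_cover VY EdY oY tY VX EdX oX tX fV fE
    by unfold_locales (use assms in auto)
  let ?g = "g_twisted VY EdY oY tY VX fV fE :: _ \<Rightarrow> 'f poly"
  let ?\<psi>\<^sub>0 = "trivial_character Gal"
  have "map_poly of_int (g_dg VY EdY oY tY) = (\<Prod>\<psi>\<in>characters Gal aut_comp. ?g \<psi>)"
    by (simp add: of_int_g_dg det_rev_char_mat_eq_prod_characters g_twisted_eq_det_on)
  also have "\<dots> = ?g ?\<psi>\<^sub>0 * (\<Prod>\<psi>\<in>characters Gal aut_comp - {?\<psi>\<^sub>0}. ?g \<psi>)"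
    by (rule prod.remove[OF finite_characters_Gal trivial_character_Gal])
  also have "?g ?\<psi>\<^sub>0 = map_poly of_int (g_dg VX EdX oX tX)"
    unfolding g_twisted_eq_det_on of_int_g_dg rev_char_mat_def
    by (rule det_on_cong) (simp add: twisted_adj_trivial_character)
  finally show ?thesis .
qed

end
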